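(* Let $q$ be a power of $2$. In $\mathrm{AG}(3,q^2)\subset\mathrm{PG}(3,q^2)$, with affine coordinates $x,y,z$, homogeneous coordinates $J,X,Y,Z$ and plane at infinity $\Sigma_\infty: J=0$, let $\mathcal H$ be the Hermitian surface with affine equation $z^q+z=x^{q+1}+y^{q+1}$ and let $\mathcal Q$ be an irreducible quadric with affine equation $z=ax^2+by^2+cxy+dx+ey+f$, where $a,b,c,d,e,f\in\mathrm{GF}(q^2)$. Let $N=|(\mathcal H\cap\mathcal Q)\setminus\Sigma_\infty|$. Then: \begin{itemize} \item if $\mathcal Q$ is elliptic, $N\in\{q^3-q^2,\ q^3-q^2+q,\ q^3-q,\ q^3,\ q^3+q,\ q^3+q^2-q,\ q^3+q^2\}$; \item if $\mathcal Q$ is a quadratic cone, $N\in\{q^3-q^2+q,\ q^3-q,\ q^3+q,\ q^3+q^2-q\}$; \item if $\mathcal Q$ is hyperbolic, $N\in\{q^2,\ q^3-q^2,\ q^3-q^2+q,\ q^3-q,\ q^3,\ q^3+q,\ q^3+q^2-q,\ q^3+q^2,\ 2q^3-q^2\}$. \end{itemize}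
   Context: Here $P_\infty=(0,0,0,1)$ lies on both $\mathcal H$ and $\mathcal Q$, and $\Sigma_\infty$ is the common tangent plane of $\mathcal H$ and $\mathcal Q$ at $P_\infty$. A quadratic cone is the quadric projecting an irreducible conic in a plane from a vertex not on that plane. *)

theory Defs
  imports Main
begin

text \<open>Points of PG(3,K) are represented by nonzero vectors (J,X,Y,Z) in K^4;
  J = 0 is the plane at infinity.\<close>

type_synonym 'a vec4 = "'a \<times> 'a \<times> 'a \<times> 'a"

fun vadd :: "'a::field vec4 \<Rightarrow> 'a vec4 \<Rightarrow> 'a vec4" where
  "vadd (a1,b1,c1,d1) (a2,b2,c2,d2) = (a1+a2, b1+b2, c1+c2, d1+d2)"

fun smul :: "'a::field \<Rightarrow> 'a vec4 \<Rightarrow> 'a vec4" where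
  "smul k (a1,b1,c1,d1) = (k*a1, k*b1, k*c1, k*d1)"

definition zero4 :: "'a::field vec4" where
  "zero4 = (0,0,0,0)"

fun linform :: "'a::field vec4 \<Rightarrow> 'a vec4 \<Rightarrow> 'a" where
  "linform (l1,l2,l3,l4) (J,X,Y,Z) = l1*J + l2*X + l3*Y + l4*Z"

text \<open>Homogenised equation of the quadric z = ax^2+by^2+cxy+dx+ey+f:
  JZ = aX^2+bY^2+cXY+dXJ+eYJ+fJ^2.\<close>
definition Qform :: "'a::field \<Rightarrow> 'a \<Rightarrow> 'a \<Rightarrow> 'a \<Rightarrow> 'a \<Rightarrow> 'a \<Rightarrow> 'a vec4 \<Rightarrow> 'a" where
  "Qform a b c d e f = (\<lambda>(J,X,Y,Z). a*X^2 + b*Y^2 + c*X*Y + d*X*J + e*Y*J + f*J^2 - J*Z)"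

definition polar :: "('a::field vec4 \<Rightarrow> 'a) \<Rightarrow> 'a vec4 \<Rightarrow> 'a vec4 \<Rightarrow> 'a" where
  "polar F u v = F (vadd u v) - F u - F v"

definition singular_pt :: "('a::field vec4 \<Rightarrow> 'a) \<Rightarrow> 'a vec4 \<Rightarrow> bool" where
  "singular_pt F v \<longleftrightarrow> v \<noteq> zero4 \<and> F v = 0 \<and> (\<forall>w. polar F v w = 0)"

definition nonsingular_quadric :: "('a::field vec4 \<Rightarrow> 'a) \<Rightarrow> bool" where
  "nonsingular_quadric F \<longleftrightarrow> \<not> (\<exists>v. singular_pt F v)"

definition irreducible_quadric :: "('a::field vec4 \<Rightarrow> 'a) \<Rightarrow> bool" where
  "irreducible_quadric F \<longleftrightarrow> \<not> (\<exists>l m. \<forall>v. F v = linform l v * linform m v)"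

definition contains_line :: "('a::field vec4 \<Rightarrow> 'a) \<Rightarrow> bool" where
  "contains_line F \<longleftrightarrow> (\<exists>u w. u \<noteq> zero4 \<and> (\<forall>k. w \<noteq> smul k u) \<and>
      (\<forall>s t. F (vadd (smul s u) (smul t w)) = 0))"

definition elliptic_quadric :: "('a::field vec4 \<Rightarrow> 'a) \<Rightarrow> bool" where
  "elliptic_quadric F \<longleftrightarrow> irreducible_quadric F \<and> nonsingular_quadric F \<and> \<not> contains_line F"

definition hyperbolic_quadric :: "('a::field vec4 \<Rightarrow> 'a) \<Rightarrow> bool" where
  "hyperbolic_quadric F \<longleftrightarrow> irreducible_quadric F \<and> nonsingular_quadric F \<and> contains_line F"

text \<open>Quadratic cone: irreducible quadric whose singular points form exactly one
  projective point (the vertex); such a quadric is the cone projecting an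
  irreducible conic from that vertex.\<close>
definition quadratic_cone :: "('a::field vec4 \<Rightarrow> 'a) \<Rightarrow> bool" where
  "quadratic_cone F \<longleftrightarrow> irreducible_quadric F \<and>
     (\<exists>V. singular_pt F V \<and> (\<forall>W. singular_pt F W \<longrightarrow> (\<exists>k. W = smul k V)))"

end

theory Submission
  imports Defs "HOL-Computational_Algebra.Polynomial" "HOL-Computational_Algebra.Primes"
begin

text \<open>
  Write \<open>tr z = z^q + z\<close> and \<open>nm z = z^(q+1)\<close> for the trace and norm of GF(q^2) over
  its subfield \<open>Fq\<close> = GF(q). Eliminating \<open>z\<close>, the affine points of the intersection are the
  pairs \<open>(x, y)\<close> with \<open>tr (a x^2 + b y^2 + c x y + d x + e y + f) = nm x + nm y\<close>. For fixed \<open>y\<close>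
  this is \<open>quad 1 a x + tr (m x) + \<nu> = 0\<close>, where \<open>quad k l x = k nm x + tr (l x^2)\<close> is, for
  \<open>0 \<noteq> k \<in> Fq\<close>, a nondegenerate \<open>Fq\<close>-valued quadratic form on the plane GF(q^2) over \<open>Fq\<close>.
  After completing the square, such an equation has \<open>1\<close> or \<open>2q - 1\<close> solutions (anisotropic
  or isotropic form) when a constant \<open>S y\<close> vanishes and \<open>q + 1\<close> or \<open>q - 1\<close> otherwise, so
  \<open>N = q^3 \<plusminus> q (q - M)\<close> where \<open>M\<close> counts the zeros of \<open>S\<close>. Now \<open>S\<close> has the same shape, with
  \<open>k = nm c + 1\<close> and \<open>l = a^q c^2 + b\<close>: for \<open>k \<noteq> 0\<close> it has \<open>1, q \<plusminus> 1\<close> or \<open>2q - 1\<close> zeros, and for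
  \<open>k = 0\<close> it is a trace equation with \<open>0, q\<close> or \<open>2q\<close> solutions unless \<open>l = 0\<close>. A quadratic
  cone has \<open>c = 0\<close>, so \<open>k = 1\<close>; an elliptic quadric has \<open>l \<noteq> 0\<close>, as for \<open>l = 0\<close> the quadric
  contains a line.
\<close>

lemma card_fiber_additive:
  fixes f :: "'a::{ab_group_add,finite} \<Rightarrow> 'b::ab_group_add"
  assumes "additive f" and "t \<in> range f"
  shows "card {x. f x = t} = card {x. f x = 0}"
proof -
  interpret additive f by fact
  obtain z where z: "f z = t" using assms(2) by blast
  have "bij_betw (\<lambda>x. x - z) {x. f x = t} {x. f x = 0}"
    by (rule bij_betw_byWitness[where f' = "\<lambda>x. x + z"]) (auto simp: diff add z)
  then show ?thesis by (rule bij_betw_same_card)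
qed

lemma card_UNIV_additive:
  fixes f :: "'a::{ab_group_add,finite} \<Rightarrow> 'b::ab_group_add"
  assumes "additive f"
  shows "card (UNIV :: 'a set) = card (range f) * card {x. f x = 0}"
proof -
  have "card (UNIV :: 'a set) = card (\<Union>t\<in>range f. {x. f x = t})"
    by (rule arg_cong[where f = card]) auto
  also have "\<dots> = (\<Sum>t\<in>range f. card {x. f x = t})"
    by (rule card_UN_disjoint) auto
  also have "\<dots> = (\<Sum>t\<in>range f. card {x. f x = 0})"
    using card_fiber_additive[OF assms] by (rule sum.cong[OF refl])
  finally show ?thesis by simp
qed

lemma bij_betw_if_inj_on_card_eq:
  assumes "inj_on f A" and "f ` A \<subseteq> B" and "finite B" and "card A = card B"
  shows "bij_betw f A B"
  using assms by (metis bij_betw_def card_image card_subset_eq)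

lemma card_roots_quadratic_le_2:
  fixes b c :: "'a::idom"
  shows "card {u. u\<^sup>2 + b * u + c = 0} \<le> 2"
proof -
  have "{u. u\<^sup>2 + b * u + c = 0} = {u. poly [:c, b, 1:] u = 0}"
    by (simp add: power2_eq_square algebra_simps)
  then show ?thesis
    using card_poly_roots_bound[of "[:c, b, 1:]"] by simp
qed

lemma card_pairs_eq_sum:
  fixes P :: "'a::finite \<Rightarrow> 'b::finite \<Rightarrow> bool"
  shows "card {(x, y). P x y} = (\<Sum>y\<in>UNIV. card {x. P x y})"
proof -
  have "{(x, y). P x y} = (\<lambda>(y, x). (x, y)) ` (SIGMA y:UNIV. {x. P x y})" by auto
  moreover have "inj_on (\<lambda>(y, x). (x, y)) (SIGMA y:UNIV. {x. P x y})"
    by (auto simp: inj_on_def)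
  ultimately show ?thesis by (simp add: card_image)
qed

lemma hermitian_count_table:
  fixes q M N :: nat
  assumes q: "q \<ge> 2"
    and N: "int N = int q ^ 3 + int q ^ 2 - int q * int M \<or> int N = int q ^ 3 - int q ^ 2 + int q * int M"
  shows "M \<in> {1, q - 1, q + 1, 2 * q - 1} \<Longrightarrow>
      N \<in> {q ^ 3 - q ^ 2 + q, q ^ 3 - q, q ^ 3 + q, q ^ 3 + q ^ 2 - q}"
    and "M \<in> {0, 1, q - 1, q, q + 1, 2 * q - 1, 2 * q} \<Longrightarrow>
      N \<in> {q ^ 3 - q ^ 2, q ^ 3 - q ^ 2 + q, q ^ 3 - q, q ^ 3, q ^ 3 + q, q ^ 3 + q ^ 2 - q, q ^ 3 + q ^ 2}"
    and "M \<in> {0, 1, q - 1, q, q + 1, 2 * q - 1, 2 * q, q ^ 2} \<Longrightarrow>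
      N \<in> {q ^ 2, q ^ 3 - q ^ 2, q ^ 3 - q ^ 2 + q, q ^ 3 - q, q ^ 3, q ^ 3 + q, q ^ 3 + q ^ 2 - q,
             q ^ 3 + q ^ 2, 2 * q ^ 3 - q ^ 2}"
proof -
  define Q where "Q = int q"
  have "q \<le> q ^ 2" "q ^ 2 \<le> q ^ 3"
    using power_increasing[of 1 2 q] power_increasing[of 2 3 q] q by simp_all
  then have le: "1 \<le> q" "q \<le> q ^ 2" "q ^ 2 \<le> q ^ 3" "q \<le> q ^ 3" "q ^ 2 \<le> 2 * q ^ 3"
      "q \<le> q ^ 3 + q ^ 2" "1 \<le> 2 * q"
    using q by linarith+
  note N' = N[folded Q_def]
  show "N \<in> {q ^ 3 - q ^ 2 + q, q ^ 3 - q, q ^ 3 + q, q ^ 3 + q ^ 2 - q}"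
    if "M \<in> {1, q - 1, q + 1, 2 * q - 1}"
  proof -
    from that have "int M \<in> {1, Q - 1, Q + 1, 2 * Q - 1}"
      unfolding Q_def using le by auto
    then have "int N \<in> {Q ^ 3 - Q ^ 2 + Q, Q ^ 3 - Q, Q ^ 3 + Q, Q ^ 3 + Q ^ 2 - Q}"
      using N' by (elim insertE emptyE disjE) (simp_all add: algebra_simps power2_eq_square power3_eq_cube)
    also have "\<dots> = int ` {q ^ 3 - q ^ 2 + q, q ^ 3 - q, q ^ 3 + q, q ^ 3 + q ^ 2 - q}"
      unfolding Q_def using le by (simp add: algebra_simps)
    finally show ?thesis by (simp only: inj_image_mem_iff[OF inj_of_nat])
  qed
  show "N \<in> {q ^ 3 - q ^ 2, q ^ 3 - q ^ 2 + q, q ^ 3 - q, q ^ 3, q ^ 3 + q, q ^ 3 + q ^ 2 - q, q ^ 3 + q ^ 2}"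
    if "M \<in> {0, 1, q - 1, q, q + 1, 2 * q - 1, 2 * q}"
  proof -
    from that have "int M \<in> {0, 1, Q - 1, Q, Q + 1, 2 * Q - 1, 2 * Q}"
      unfolding Q_def using le by auto
    then have "int N \<in> {Q ^ 3 - Q ^ 2, Q ^ 3 - Q ^ 2 + Q, Q ^ 3 - Q, Q ^ 3, Q ^ 3 + Q, Q ^ 3 + Q ^ 2 - Q, Q ^ 3 + Q ^ 2}"
      using N' by (elim insertE emptyE disjE) (simp_all add: algebra_simps power2_eq_square power3_eq_cube)
    also have "\<dots> = int ` {q ^ 3 - q ^ 2, q ^ 3 - q ^ 2 + q, q ^ 3 - q, q ^ 3, q ^ 3 + q, q ^ 3 + q ^ 2 - q, q ^ 3 + q ^ 2}"
      unfolding Q_def using le by (simp add: algebra_simps)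
    finally show ?thesis by (simp only: inj_image_mem_iff[OF inj_of_nat])
  qed
  show "N \<in> {q ^ 2, q ^ 3 - q ^ 2, q ^ 3 - q ^ 2 + q, q ^ 3 - q, q ^ 3, q ^ 3 + q, q ^ 3 + q ^ 2 - q,
      q ^ 3 + q ^ 2, 2 * q ^ 3 - q ^ 2}"
    if "M \<in> {0, 1, q - 1, q, q + 1, 2 * q - 1, 2 * q, q ^ 2}"
  proof -
    from that have "int M \<in> {0, 1, Q - 1, Q, Q + 1, 2 * Q - 1, 2 * Q, Q ^ 2}"
      unfolding Q_def using le by auto
    then have "int N \<in> {Q ^ 2, Q ^ 3 - Q ^ 2, Q ^ 3 - Q ^ 2 + Q, Q ^ 3 - Q, Q ^ 3, Q ^ 3 + Q, Q ^ 3 + Q ^ 2 - Q,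
        Q ^ 3 + Q ^ 2, 2 * Q ^ 3 - Q ^ 2}"
      using N' by (elim insertE emptyE disjE) (simp_all add: algebra_simps power2_eq_square power3_eq_cube)
    also have "\<dots> = int ` {q ^ 2, q ^ 3 - q ^ 2, q ^ 3 - q ^ 2 + q, q ^ 3 - q, q ^ 3, q ^ 3 + q, q ^ 3 + q ^ 2 - q,
        q ^ 3 + q ^ 2, 2 * q ^ 3 - q ^ 2}"
      unfolding Q_def using le by (simp add: algebra_simps)
    finally show ?thesis by (simp only: inj_image_mem_iff[OF inj_of_nat])
  qed
qed

section \<open>Fields of order q^2 and characteristic 2\<close>

locale gf_q2 =
  fixes q :: nat and field_type :: "'a::{field,finite} itself"
  assumes q_power_of_two: "\<exists>h. q = 2 ^ h"
    and card_UNIV_eq: "card (UNIV :: 'a set) = q\<^sup>2"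
begin

lemma q_ge_2: "q \<ge> 2"
proof -
  have "card {0, 1 :: 'a} \<le> card (UNIV :: 'a set)" by (rule card_mono) auto
  then have "2 \<le> q\<^sup>2" using card_UNIV_eq by simp
  then show ?thesis
    by (metis One_nat_def le_less_linear less_2_cases_iff power_one power_zero_numeral)
qed

lemma power_card_eq_self: "(x::'a) ^ q\<^sup>2 = x"
proof (cases "x = 0")
  case False
  let ?U = "UNIV - {0::'a}"
  have "\<Prod>?U = (\<Prod>y\<in>?U. x * y)"
    by (rule prod.reindex_bij_witness[of _ "\<lambda>y. y / x" "\<lambda>y. x * y", symmetric]) (use False in auto)
  also have "\<dots> = x ^ (q\<^sup>2 - 1) * \<Prod>?U"
    using card_UNIV_eq by (simp add: prod.distrib)
  finally have "x ^ (q\<^sup>2 - 1) = 1"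
    by simp
  then have "x * x ^ (q\<^sup>2 - 1) = x" by simp
  then show ?thesis
    using q_ge_2 by (simp flip: power_Suc)
qed (use q_ge_2 in simp)

lemma two_eq_0: "(2::'a) = 0"
proof -
  obtain h where "q = 2 ^ h" using q_power_of_two by blast
  with q_ge_2 have "even (q\<^sup>2)" by (cases h) simp_all
  then have "(-1::'a) = 1" using power_card_eq_self[of "-1"] neg_one_even_power by metis
  then show ?thesis by (metis one_add_one add.right_inverse)
qed

lemma CHAR_eq_2: "CHAR('a) = 2"
proof (rule CHAR_eq_posI)
  show "of_nat 2 = (0::'a)" using two_eq_0 by simp
  show "of_nat n \<noteq> (0::'a)" if "n > 0" "n < 2" for n
    using that by (simp add: less_2_cases_iff)
qed simp

lemma add_self_eq_0 [simp]: "(x::'a) + x = 0"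
  by (metis mult_2 mult_zero_left two_eq_0)

lemma add_eq_0_iff_eq: "(x::'a) + y = 0 \<longleftrightarrow> x = y"
  by (metis add_self_eq_0 add_right_cancel)

lemma power_q_add: "((x::'a) + y) ^ q = x ^ q + y ^ q"
proof -
  obtain h where "q = 2 ^ h" using q_power_of_two by blast
  then show ?thesis by (intro freshmans_dream') (simp_all add: CHAR_eq_2)
qed

lemma power_q_power_q [simp]: "((x::'a) ^ q) ^ q = x"
  using power_card_eq_self[of x] by (simp add: power2_eq_square flip: power_mult)

lemma add_eq_iff_eq_add: "(x::'a) + y = z \<longleftrightarrow> x = y + z"
proof -
  have "x + y = z \<longleftrightarrow> x + y + z = 0" by (rule add_eq_0_iff_eq[symmetric])
  also have "\<dots> \<longleftrightarrow> x = y + z" by (simp only: add.assoc add_eq_0_iff_eq)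
  finally show ?thesis .
qed

lemma square_add: "((x::'a) + y)\<^sup>2 = x\<^sup>2 + y\<^sup>2"
  by (simp add: power2_sum two_eq_0)

lemma power_q_square: "((x::'a)\<^sup>2) ^ q = (x ^ q)\<^sup>2"
  by (simp only: power_mult[symmetric] mult.commute)

lemma square_inj: "(x::'a)\<^sup>2 = y\<^sup>2 \<Longrightarrow> x = y"
  using square_add[of x y] add_eq_0_iff_eq by (metis zero_eq_power2)

lemma exists_sqrt: "\<exists>r::'a. r\<^sup>2 = x"
proof -
  have "surj (\<lambda>r::'a. r\<^sup>2)"
    by (rule finite_UNIV_inj_surj[OF finite_UNIV]) (auto intro: injI square_inj)
  then show ?thesis by (metis surjD)
qed

subsection \<open>Trace, norm and the subfield GF(q)\<close>

definition Fq :: "'a set" where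
  "Fq = {z. z ^ q = z}"

definition tr :: "'a \<Rightarrow> 'a" where
  "tr z = z ^ q + z"

definition nm :: "'a \<Rightarrow> 'a" where
  "nm z = z ^ q * z"

lemma mem_Fq_iff: "s \<in> Fq \<longleftrightarrow> s ^ q = s"
  by (simp add: Fq_def)

lemma zero_power_q [simp]: "(0::'a) ^ q = 0"
  using q_ge_2 by simp

lemma Fq_closed [intro, simp]:
  "0 \<in> Fq" "1 \<in> Fq"
  "s \<in> Fq \<Longrightarrow> t \<in> Fq \<Longrightarrow> s + t \<in> Fq"
  "s \<in> Fq \<Longrightarrow> t \<in> Fq \<Longrightarrow> s * t \<in> Fq"
  "s \<in> Fq \<Longrightarrow> inverse s \<in> Fq"
  "s \<in> Fq \<Longrightarrow> t \<in> Fq \<Longrightarrow> s / t \<in> Fq"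
  "s \<in> Fq \<Longrightarrow> s ^ n \<in> Fq"
  by (simp_all add: mem_Fq_iff power_q_add power_mult_distrib power_inverse power_divide)
    (metis mult.commute power_mult)

lemma additive_tr: "additive tr"
  by unfold_locales (simp add: tr_def power_q_add ac_simps)

lemmas tr_add = additive.add[OF additive_tr]
lemmas tr_0 [simp] = additive.zero[OF additive_tr]

lemma tr_in_Fq [simp]: "tr z \<in> Fq"
  by (simp add: mem_Fq_iff tr_def power_q_add add.commute)

lemma tr_eq_0_iff: "tr z = 0 \<longleftrightarrow> z \<in> Fq"
  by (simp add: tr_def mem_Fq_iff add_eq_0_iff_eq)

lemma tr_mult_Fq: "s \<in> Fq \<Longrightarrow> tr (s * z) = s * tr z"
  by (simp add: tr_def mem_Fq_iff power_mult_distrib distrib_left)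

lemma tr_power_q: "tr (z ^ q) = tr z"
  by (simp add: tr_def add.commute)

lemma tr_square: "tr (z\<^sup>2) = (tr z)\<^sup>2"
  by (simp add: tr_def square_add flip: power_mult) (simp add: mult.commute)

lemma nm_in_Fq [simp]: "nm z \<in> Fq"
  by (simp add: mem_Fq_iff nm_def power_mult_distrib mult.commute)

lemma nm_eq_power: "nm z = z ^ (q + 1)"
  by (simp add: nm_def mult.commute)

lemma nm_add: "nm (x + y) = nm x + nm y + tr (x * y ^ q)"
  by (simp add: nm_def tr_def power_q_add algebra_simps)

lemma nm_mult: "nm (x * y) = nm x * nm y"
  by (simp add: nm_def power_mult_distrib mult_ac)

lemma nm_mult_Fq: "s \<in> Fq \<Longrightarrow> nm (s * z) = s\<^sup>2 * nm z"
  by (simp add: nm_def mem_Fq_iff power_mult_distrib power2_eq_square mult_ac)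

lemma card_Fq_le: "card Fq \<le> q"
proof -
  define p :: "'a poly" where "p = monom 1 q + [:0, 1:]"
  have "degree p = q"
    using q_ge_2 unfolding p_def by (simp add: degree_add_eq_left degree_monom_eq)
  moreover have "{x. poly p x = 0} = Fq"
    by (auto simp: p_def poly_monom mem_Fq_iff add_eq_0_iff_eq)
  moreover have "p \<noteq> 0"
    using calculation(1) q_ge_2 by auto
  ultimately show ?thesis using card_poly_roots_bound[of p] by simp
qed

lemma card_Fq: "card Fq = q" and range_tr: "range tr = Fq"
proof -
  have sub: "range tr \<subseteq> Fq" by auto
  have fin: "finite Fq" by simp
  have "q\<^sup>2 = card (range tr) * card Fq"
    using card_UNIV_additive[OF additive_tr] card_UNIV_eq by (simp add: tr_eq_0_iff)
  also have "\<dots> \<le> card Fq * card Fq"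
    using card_mono[OF fin sub] by simp
  finally have "q \<le> card Fq"
    by (metis power2_eq_square power2_le_imp_le zero_le)
  then show cF: "card Fq = q" using card_Fq_le by simp
  with \<open>q\<^sup>2 = card (range tr) * card Fq\<close> have "card (range tr) = card Fq"
    using q_ge_2 by (simp add: power2_eq_square)
  then show "range tr = Fq" using card_subset_eq[OF fin sub] by simp
qed

lemma exists_tr_eq: "t \<in> Fq \<Longrightarrow> \<exists>z. tr z = t"
  using range_tr by (metis rangeE)

lemma card_tr_linear_fiber:
  assumes "r \<noteq> 0" and "t \<in> Fq"
  shows "card {y. tr (r * y) = t} = q"
proof -
  have add: "additive (\<lambda>y. tr (r * y))"
    by unfold_locales (simp add: distrib_left tr_add)
  obtain z where "tr z = t" using exists_tr_eq[OF assms(2)] by blast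
  then have "tr (r * (z / r)) = t" using assms(1) by simp
  then have "t \<in> range (\<lambda>y. tr (r * y))" by (metis rangeI)
  then have "card {y. tr (r * y) = t} = card {y. tr (r * y) = 0}"
    by (rule card_fiber_additive[OF add])
  also have "\<dots> = card Fq"
  proof (rule bij_betw_same_card[symmetric])
    show "bij_betw (\<lambda>s. s / r) Fq {y. tr (r * y) = 0}"
      by (rule bij_betw_byWitness[where f' = "\<lambda>y. r * y"]) (use assms(1) in \<open>auto simp: tr_eq_0_iff\<close>)
  qed
  also have "\<dots> = q" by (rule card_Fq)
  finally show ?thesis .
qed

subsection \<open>Binary quadratic forms over GF(q)\<close>

lemma sqrt_in_Fq:
  assumes "t \<in> Fq"
  obtains s where "s \<in> Fq" and "s\<^sup>2 = t"
proof -
  obtain s where s: "s\<^sup>2 = t" using exists_sqrt by blast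
  have "(s ^ q)\<^sup>2 = (s\<^sup>2) ^ q"
    by (rule power_q_square[symmetric])
  also have "\<dots> = s\<^sup>2"
    using assms s by (simp add: mem_Fq_iff)
  finally have "(s ^ q)\<^sup>2 = s\<^sup>2" .
  then have "s \<in> Fq" by (simp add: mem_Fq_iff square_inj)
  with s show ?thesis using that by blast
qed

definition quad :: "'a \<Rightarrow> 'a \<Rightarrow> 'a \<Rightarrow> 'a" where
  "quad k l y = k * nm y + tr (l * y\<^sup>2)"

definition isotropic :: "'a \<Rightarrow> 'a \<Rightarrow> bool" where
  "isotropic k l \<longleftrightarrow> (\<exists>y. y \<noteq> 0 \<and> quad k l y = 0)"

lemma quad_in_Fq: "k \<in> Fq \<Longrightarrow> quad k l y \<in> Fq"
  by (simp add: quad_def)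

lemma quad_0 [simp]: "quad k l 0 = 0"
  by (simp add: quad_def nm_def tr_def)

lemma quad_add: "quad k l (x + y) = quad k l x + quad k l y + k * tr (x * y ^ q)"
  by (simp add: quad_def nm_add square_add tr_add algebra_simps)

lemma quad_mult_Fq:
  assumes "s \<in> Fq"
  shows "quad k l (s * y) = s\<^sup>2 * quad k l y"
proof -
  have "tr (l * (s * y)\<^sup>2) = tr (s\<^sup>2 * (l * y\<^sup>2))"
    by (simp add: power_mult_distrib mult_ac)
  also have "\<dots> = s\<^sup>2 * tr (l * y\<^sup>2)"
    using assms by (simp add: tr_mult_Fq)
  finally have "quad k l (s * y) = k * (s\<^sup>2 * nm y) + s\<^sup>2 * tr (l * y\<^sup>2)"
    unfolding quad_def nm_mult_Fq[OF assms] by (rule arg_cong)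
  then show ?thesis by (simp add: quad_def algebra_simps)
qed

lemma card_quad_fiber_eq_1:
  assumes "t \<in> Fq" and "t \<noteq> 0"
  shows "card {y. quad k l y = t} = card {y. quad k l y = 1}"
proof -
  obtain s where s: "s \<in> Fq" "s\<^sup>2 = t" using sqrt_in_Fq[OF assms(1)] .
  with assms(2) have "s \<noteq> 0" by auto
  have scale: "quad k l y = t * quad k l (y / s)" for y
  proof -
    have "quad k l y = quad k l (s * (y / s))" using \<open>s \<noteq> 0\<close> by simp
    also have "\<dots> = s\<^sup>2 * quad k l (y / s)" by (rule quad_mult_Fq[OF s(1)])
    finally show ?thesis using s(2) by simp
  qed
  have iff: "quad k l y = t \<longleftrightarrow> quad k l (y / s) = 1" for y
    using scale[of y] assms(2) by simp
  have "bij_betw (\<lambda>y. y / s) {y. quad k l y = t} {y. quad k l y = 1}"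
  proof (rule bij_betw_byWitness[where f' = "\<lambda>y. s * y"])
    show "(\<lambda>y. y / s) ` {y. quad k l y = t} \<subseteq> {y. quad k l y = 1}"
      using iff by blast
    show "(\<lambda>y. s * y) ` {y. quad k l y = 1} \<subseteq> {y. quad k l y = t}"
      using quad_mult_Fq[OF s(1)] s(2) by auto
  qed (use \<open>s \<noteq> 0\<close> in simp_all)
  then show ?thesis by (rule bij_betw_same_card)
qed

lemma card_quad_0_plus_card_quad_1:
  assumes "k \<in> Fq"
  shows "card {y. quad k l y = 0} + (q - 1) * card {y. quad k l y = 1} = q\<^sup>2"
proof -
  have "(\<Union>t\<in>Fq. {y. quad k l y = t}) = UNIV"
    using quad_in_Fq[OF assms] by auto
  then have "q\<^sup>2 = card (\<Union>t\<in>Fq. {y. quad k l y = t})"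
    using card_UNIV_eq by simp
  also have "\<dots> = (\<Sum>t\<in>Fq. card {y. quad k l y = t})"
    by (rule card_UN_disjoint) auto
  also have "\<dots> = card {y. quad k l y = 0} + (\<Sum>t\<in>Fq - {0}. card {y. quad k l y = t})"
    by (rule sum.remove) simp_all
  also have "(\<Sum>t\<in>Fq - {0}. card {y. quad k l y = t}) = (\<Sum>t\<in>Fq - {0}. card {y. quad k l y = 1})"
    by (rule sum.cong) (auto intro: card_quad_fiber_eq_1)
  also have "\<dots> = (q - 1) * card {y. quad k l y = 1}"
    using card_Fq by simp
  finally show ?thesis by simp
qed

lemma bij_Fq_coordinates:
  assumes "tr (x0 * w ^ q) \<noteq> 0"
  shows "bij_betw (\<lambda>(a, b). a * x0 + b * w) (Fq \<times> Fq) UNIV"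
proof -
  have "x0 \<noteq> 0" using assms by auto
  have independent: "a = 0 \<and> b = 0" if "a \<in> Fq" "b \<in> Fq" "a * x0 = b * w" for a b
  proof -
    have "b = 0"
    proof (rule ccontr)
      assume "b \<noteq> 0"
      then have "w = (a / b) * x0"
        using that(3) by (simp add: field_simps)
      then have "w ^ q = (a / b) * x0 ^ q"
        using that(1,2) by (simp add: power_mult_distrib power_divide mem_Fq_iff)
      then have "x0 * w ^ q = (a / b) * nm x0"
        by (simp add: nm_def mult_ac)
      then have "tr (x0 * w ^ q) = 0"
        using that by (simp add: tr_mult_Fq tr_eq_0_iff)
      with assms show False ..
    qed
    with that \<open>x0 \<noteq> 0\<close> show ?thesis by simp
  qed
  have "inj_on (\<lambda>(a, b). a * x0 + b * w) (Fq \<times> Fq)"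
  proof (rule inj_onI, clarify)
    fix a b a' b' assume Fq: "a \<in> Fq" "b \<in> Fq" "a' \<in> Fq" "b' \<in> Fq"
      and eq: "a * x0 + b * w = a' * x0 + b' * w"
    have "(a + a') * x0 + (b + b') * w = (a * x0 + b * w) + (a' * x0 + b' * w)"
      by (simp add: algebra_simps)
    also have "\<dots> = 0" using eq by simp
    finally have lin: "(a + a') * x0 = (b + b') * w" by (simp add: add_eq_0_iff_eq)
    have "a + a' = 0 \<and> b + b' = 0" using independent[OF _ _ lin] Fq by simp
    then show "a = a' \<and> b = b'" by (simp add: add_eq_0_iff_eq)
  qed
  moreover have "card (Fq \<times> Fq) = card (UNIV :: 'a set)"
    using card_Fq card_UNIV_eq by (simp add: card_cartesian_product power2_eq_square)
  ultimately show ?thesis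
    by (intro bij_betw_if_inj_on_card_eq) auto
qed

lemma card_line_pair_Fq:
  assumes "c \<in> Fq"
  shows "card {(a, b). a \<in> Fq \<and> b \<in> Fq \<and> b * (b * c + a) = 0} = 2 * q - 1"
proof -
  let ?A = "(\<lambda>a. (a, 0::'a)) ` Fq" and ?B = "(\<lambda>b. (b * c, b)) ` (Fq - {0})"
  have "{(a, b). a \<in> Fq \<and> b \<in> Fq \<and> b * (b * c + a) = 0} = ?A \<union> ?B"
    using assms by (auto simp: add_eq_0_iff_eq)
  moreover have "card ?A = q"
    using card_Fq by (simp add: card_image inj_on_def)
  moreover have "card ?B = q - 1"
    using card_Fq by (simp add: card_image inj_on_def)
  moreover have "card (?A \<union> ?B) = card ?A + card ?B"
    by (rule card_Un_disjoint) auto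
  ultimately show ?thesis
    using q_ge_2 by simp
qed

lemma card_quad_0_isotropic:
  assumes k: "k \<in> Fq" "k \<noteq> 0" and "isotropic k l"
  shows "card {y. quad k l y = 0} = 2 * q - 1"
proof -
  obtain x0 where x0: "x0 \<noteq> 0" "quad k l x0 = 0"
    using assms(3) by (auto simp: isotropic_def)
  obtain z where z: "tr z = inverse k"
    using exists_tr_eq k(1) by blast
  define w where "w = (z / x0) ^ q"
  have "x0 * w ^ q = z" unfolding w_def using x0(1) by simp
  then have kw: "k * tr (x0 * w ^ q) = 1" using z k(2) by simp
  \<comment> \<open>In the \<open>Fq\<close>-basis \<open>x0, w\<close> the zero set of the form is a pair of lines.\<close>
  have coord: "quad k l (a * x0 + b * w) = b * (b * quad k l w + a)" if "a \<in> Fq" "b \<in> Fq" for a b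
  proof -
    have "k * tr (a * x0 * (b * w) ^ q) = k * tr ((a * b) * (x0 * w ^ q))"
      using that(2) by (simp add: power_mult_distrib mem_Fq_iff mult_ac)
    also have "\<dots> = (a * b) * (k * tr (x0 * w ^ q))"
      using that by (simp add: tr_mult_Fq mult_ac)
    finally have "k * tr (a * x0 * (b * w) ^ q) = a * b"
      using kw by simp
    then show ?thesis
      using that x0(2) by (simp add: quad_add quad_mult_Fq algebra_simps power2_eq_square)
  qed
  have "bij_betw (\<lambda>(a, b). a * x0 + b * w) (Fq \<times> Fq) UNIV"
    using kw by (intro bij_Fq_coordinates) auto
  then have "bij_betw (\<lambda>(a, b). a * x0 + b * w)
      {p \<in> Fq \<times> Fq. case p of (a, b) \<Rightarrow> b * (b * quad k l w + a) = 0} {y \<in> UNIV. quad k l y = 0}"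
    by (rule bij_betw_Collect) (auto simp: coord quad_mult_Fq x0(2))
  then have "card {p \<in> Fq \<times> Fq. case p of (a, b) \<Rightarrow> b * (b * quad k l w + a) = 0}
      = card {y. quad k l y = 0}"
    by (simp add: bij_betw_same_card)
  moreover have "{p \<in> Fq \<times> Fq. case p of (a, b) \<Rightarrow> b * (b * quad k l w + a) = 0}
      = {(a, b). a \<in> Fq \<and> b \<in> Fq \<and> b * (b * quad k l w + a) = 0}"
    by blast
  ultimately show ?thesis
    using card_line_pair_Fq[OF quad_in_Fq[OF k(1)]] by simp
qed

lemma card_quad_0:
  assumes "k \<in> Fq" and "k \<noteq> 0"
  shows "card {y. quad k l y = 0} = (if isotropic k l then 2 * q - 1 else 1)"
proof (cases "isotropic k l")
  case False
  then have "{y. quad k l y = 0} = {0}" by (auto simp: isotropic_def)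
  with False show ?thesis by simp
qed (use card_quad_0_isotropic assms in simp)

lemma card_quad_value:
  assumes "k \<in> Fq" and "k \<noteq> 0" and "t \<in> Fq"
  shows "card {y. quad k l y = t} =
    (if t = 0 then (if isotropic k l then 2 * q - 1 else 1)
     else (if isotropic k l then q - 1 else q + 1))"
proof (cases "t = 0")
  case False
  obtain r where r: "q = r + 2" using q_ge_2 by (metis add.commute le_Suc_ex)
  define C where "C = card {y. quad k l y = 1}"
  have "card {y. quad k l y = 0} + (r + 1) * C = (r + 1) * (r + 3) + 1"
    using card_quad_0_plus_card_quad_1[OF assms(1), of l] r by (simp add: C_def power2_eq_square algebra_simps)
  then have "(r + 1) * C = (r + 1) * (if isotropic k l then r + 1 else r + 3)"
    using card_quad_0[OF assms(1,2), of l] r by (simp add: algebra_simps split: if_splits)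
  then have "C = (if isotropic k l then r + 1 else r + 3)"
    by (simp only: mult_left_cancel)
  with False r show ?thesis using card_quad_fiber_eq_1[OF assms(3) False] by (simp add: C_def)
qed (use card_quad_0 assms in simp)

lemma quad_translate:
  fixes m :: 'a
  assumes "k \<in> Fq" and "k \<noteq> 0"
  defines "w \<equiv> (m / k) ^ q"
  shows "quad k l (y + w) + tr (m * (y + w)) = quad k l y + (quad k l w + tr (m * w))"
proof -
  have "k * tr (y * w ^ q) = tr (k * (y * (m / k)))"
    unfolding w_def power_q_power_q by (rule tr_mult_Fq[OF assms(1), symmetric])
  also have "\<dots> = tr (m * y)"
    using assms(2) by (simp add: mult.commute)
  finally have cancel: "k * tr (y * w ^ q) + tr (m * y) = 0" by simp
  have "quad k l (y + w) + tr (m * (y + w))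
      = quad k l y + (quad k l w + tr (m * w)) + (k * tr (y * w ^ q) + tr (m * y))"
    by (simp only: quad_add distrib_left tr_add) (simp add: add_ac)
  then show ?thesis unfolding cancel by simp
qed

lemma card_quad_affine_eq:
  fixes m :: 'a
  assumes "k \<in> Fq" and "k \<noteq> 0"
  defines "w \<equiv> (m / k) ^ q"
  shows "card {y. quad k l y + tr (m * y) + nu = 0} = card {y. quad k l y = quad k l w + tr (m * w) + nu}"
proof -
  have shift: "quad k l (y + w) + tr (m * (y + w)) + nu = 0 \<longleftrightarrow> quad k l y = quad k l w + tr (m * w) + nu"
    for y
    using quad_translate[OF assms(1,2), where l = l and m = m and y = y]
    by (simp add: w_def add_eq_0_iff_eq add.assoc)
  have involution: "y + w + w = y" for y
    by (simp add: add.assoc)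
  have "bij_betw (\<lambda>y. y + w) {y. quad k l y = quad k l w + tr (m * w) + nu}
      {y. quad k l y + tr (m * y) + nu = 0}"
  proof (rule bij_betw_byWitness[where f' = "\<lambda>y. y + w"])
    show "(\<lambda>y. y + w) ` {y. quad k l y = quad k l w + tr (m * w) + nu}
        \<subseteq> {y. quad k l y + tr (m * y) + nu = 0}"
      by (simp add: image_subset_iff shift)
    show "(\<lambda>y. y + w) ` {y. quad k l y + tr (m * y) + nu = 0}
        \<subseteq> {y. quad k l y = quad k l w + tr (m * w) + nu}"
      using shift[of "y + w" for y] by (simp add: image_subset_iff involution)
  qed (simp_all add: involution)
  then show ?thesis by (simp add: bij_betw_same_card)
qed

lemma card_quad_affine_nondegenerate:
  assumes "k \<in> Fq" and "k \<noteq> 0" and "nu \<in> Fq"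
  shows "card {y. quad k l y + tr (m * y) + nu = 0} \<in> {1, q - 1, q + 1, 2 * q - 1}"
  using card_quad_affine_eq[OF assms(1,2)] card_quad_value[OF assms(1,2)] assms quad_in_Fq
  by (simp split: if_splits)

subsection \<open>Degenerate forms\<close>

lemma card_tr_square_affine_Fq:
  assumes "mu \<in> Fq" and "nu \<in> Fq"
  shows "card {z. (tr z)\<^sup>2 + tr (mu * z) + nu = 0} \<in> {0, q, 2 * q}"
proof -
  define R where "R = {u \<in> Fq. u\<^sup>2 + mu * u + nu = 0}"
  have "{z. (tr z)\<^sup>2 + tr (mu * z) + nu = 0} = (\<Union>u\<in>R. {z. tr z = u})"
    using assms(1) by (auto simp: R_def tr_mult_Fq)
  then have "card {z. (tr z)\<^sup>2 + tr (mu * z) + nu = 0} = card (\<Union>u\<in>R. {z. tr z = u})"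
    by simp
  also have "\<dots> = (\<Sum>u\<in>R. card {z. tr z = u})"
    by (rule card_UN_disjoint) auto
  also have "\<dots> = card R * q"
    using card_tr_linear_fiber[of 1] by (simp add: R_def)
  finally have "card {z. (tr z)\<^sup>2 + tr (mu * z) + nu = 0} = card R * q" .
  moreover have "card R \<le> 2"
    using card_mono[of "{u. u\<^sup>2 + mu * u + nu = 0}" R] card_roots_quadratic_le_2[of mu nu]
    by (force simp: R_def)
  ultimately show ?thesis
    by (auto simp: le_Suc_eq numeral_2_eq_2)
qed

lemma card_tr_square_affine_not_Fq:
  assumes "mu \<notin> Fq" and "nu \<in> Fq"
  shows "card {z. (tr z)\<^sup>2 + tr (mu * z) + nu = 0} = q"
proof -
  define g where "g z = (tr z, tr (mu * z))" for z
  have "tr mu \<noteq> 0" using assms(1) by (simp add: tr_eq_0_iff)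
  have "inj g"
  proof (rule injI)
    fix z z' assume "g z = g z'"
    then have "z + z' \<in> Fq" and "tr ((z + z') * mu) = 0"
      by (simp_all add: g_def tr_add algebra_simps flip: tr_eq_0_iff)
    then have "(z + z') * tr mu = 0"
      by (simp add: tr_mult_Fq)
    with \<open>tr mu \<noteq> 0\<close> show "z = z'" by (simp add: add_eq_0_iff_eq)
  qed
  moreover have "range g \<subseteq> Fq \<times> Fq" by (auto simp: g_def)
  moreover have "card (Fq \<times> Fq) = card (UNIV :: 'a set)"
    using card_Fq card_UNIV_eq by (simp add: card_cartesian_product power2_eq_square)
  ultimately have "bij_betw g UNIV (Fq \<times> Fq)"
    by (intro bij_betw_if_inj_on_card_eq) auto
  then have "bij_betw g {z \<in> UNIV. (tr z)\<^sup>2 + tr (mu * z) + nu = 0}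
      {p \<in> Fq \<times> Fq. case p of (u, v) \<Rightarrow> u\<^sup>2 + v + nu = 0}"
    by (rule bij_betw_Collect) (simp add: g_def)
  moreover have "{p \<in> Fq \<times> Fq. case p of (u, v) \<Rightarrow> u\<^sup>2 + v + nu = 0} = (\<lambda>u. (u, u\<^sup>2 + nu)) ` Fq"
    using assms(2) by (auto simp: add_eq_0_iff_eq add.assoc)
  moreover have "card ((\<lambda>u. (u, u\<^sup>2 + nu)) ` Fq) = q"
    using card_Fq by (simp add: card_image inj_on_def)
  ultimately show ?thesis by (simp add: bij_betw_same_card)
qed

lemma card_tr_quadratic:
  assumes "nu \<in> Fq"
  shows "card {y. tr (l * y\<^sup>2) + tr (m * y) + nu = 0} \<in> {0, q, 2 * q}
    \<or> (l = 0 \<and> card {y. tr (l * y\<^sup>2) + tr (m * y) + nu = 0} = q\<^sup>2)"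
proof (cases "l = 0")
  case True
  then show ?thesis
  proof (cases "m = 0")
    case False
    with True assms show ?thesis
      using card_tr_linear_fiber[OF False assms] by (simp add: add_eq_0_iff_eq)
  qed (use assms card_UNIV_eq in \<open>cases "nu = 0"; simp\<close>)
next
  case False
  obtain r where r: "r\<^sup>2 = l" using exists_sqrt by blast
  with False have "r \<noteq> 0" by auto
  have "tr (l * y\<^sup>2) + tr (m * y) = (tr (r * y))\<^sup>2 + tr (m / r * (r * y))" for y
    using r \<open>r \<noteq> 0\<close> by (simp add: power_mult_distrib flip: tr_square)
  then have "bij_betw (\<lambda>y. r * y) {y. tr (l * y\<^sup>2) + tr (m * y) + nu = 0}
      {z. (tr z)\<^sup>2 + tr (m / r * z) + nu = 0}"
    using \<open>r \<noteq> 0\<close> by (intro bij_betw_byWitness[where f' = "\<lambda>z. z / r"]) auto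
  then have "card {y. tr (l * y\<^sup>2) + tr (m * y) + nu = 0} = card {z. (tr z)\<^sup>2 + tr (m / r * z) + nu = 0}"
    by (rule bij_betw_same_card)
  moreover have "card {z. (tr z)\<^sup>2 + tr (m / r * z) + nu = 0} \<in> {0, q, 2 * q}"
  proof (cases "m / r \<in> Fq")
    case True
    then show ?thesis by (rule card_tr_square_affine_Fq[OF _ assms])
  next
    case False
    then show ?thesis using card_tr_square_affine_not_Fq[OF False assms] by simp
  qed
  ultimately show ?thesis by simp
qed

lemma card_quad_affine_cases:
  assumes "k \<in> Fq" and "nu \<in> Fq"
  shows "card {y. quad k l y + tr (m * y) + nu = 0} \<in> {0, 1, q - 1, q, q + 1, 2 * q - 1, 2 * q}
    \<or> (k = 0 \<and> l = 0 \<and> card {y. quad k l y + tr (m * y) + nu = 0} = q\<^sup>2)"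
proof (cases "k = 0")
  case True
  then show ?thesis
    using card_tr_quadratic[OF assms(2), of l m] by (auto simp: quad_def)
qed (use card_quad_affine_nondegenerate[OF assms(1) _ assms(2)] in auto)

subsection \<open>Artin-Schreier equations\<close>

lemma square_plus_self_eq_iff: "x\<^sup>2 + x = y\<^sup>2 + (y::'a) \<longleftrightarrow> y = x \<or> y = x + 1"
proof -
  have "(x + y) * (x + y + 1) = (x + y)\<^sup>2 + (x + y)"
    by (simp add: power2_eq_square algebra_simps)
  also have "\<dots> = (x\<^sup>2 + x) + (y\<^sup>2 + y)"
    by (simp add: square_add add_ac)
  finally have "x\<^sup>2 + x = y\<^sup>2 + y \<longleftrightarrow> (x + y) * (x + y + 1) = 0"
    by (simp only: add_eq_0_iff_eq)
  also have "\<dots> \<longleftrightarrow> x + y = 0 \<or> (x + 1) + y = 0"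
    by (simp add: add_ac)
  finally show ?thesis
    by (auto simp: add_eq_0_iff_eq)
qed

lemma card_Fq_le_double_card_image: "card Fq \<le> 2 * card ((\<lambda>x. x\<^sup>2 + x) ` Fq)"
proof -
  let ?A = "(\<lambda>x. x\<^sup>2 + x) ` Fq"
  have fiber: "card {x \<in> Fq. x\<^sup>2 + x = t} \<le> 2" for t
  proof (cases "\<exists>x0 \<in> Fq. x0\<^sup>2 + x0 = t")
    case True
    then obtain x0 where "x0\<^sup>2 + x0 = t" by blast
    then have "{x \<in> Fq. x\<^sup>2 + x = t} \<subseteq> {x0, x0 + 1}"
      using square_plus_self_eq_iff by (auto simp: two_eq_0)
    then have "card {x \<in> Fq. x\<^sup>2 + x = t} \<le> card {x0, x0 + 1}"
      by (intro card_mono) auto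
    also have "\<dots> \<le> 2"
      by (simp add: card_insert_if)
    finally show ?thesis .
  next
    case False
    then have "{x \<in> Fq. x\<^sup>2 + x = t} = {}" by auto
    then show ?thesis by (simp only: card.empty)
  qed
  have "card Fq = card (\<Union>t\<in>?A. {x \<in> Fq. x\<^sup>2 + x = t})"
    by (rule arg_cong[where f = card]) auto
  also have "\<dots> \<le> (\<Sum>t\<in>?A. card {x \<in> Fq. x\<^sup>2 + x = t})"
    by (rule card_UN_le) simp
  also have "\<dots> \<le> (\<Sum>t\<in>?A. 2)"
    by (rule sum_mono) (rule fiber)
  finally show ?thesis by simp
qed

lemma exists_root_artin_schreier:
  assumes "g \<in> Fq"
  shows "\<exists>v. v\<^sup>2 + v + g = 0"
proof -
  \<comment> \<open>The image of \<open>x^2 + x\<close> on \<open>Fq\<close> and its translate by \<open>rho\<close>, the image on \<open>de + Fq\<close>,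
    are disjoint subsets of \<open>Fq\<close> with at least \<open>q/2\<close> elements each, so they cover \<open>Fq\<close>.\<close>
  let ?ph = "\<lambda>x::'a. x\<^sup>2 + x"
  let ?A = "?ph ` Fq"
  obtain de where de: "tr de = 1" using exists_tr_eq by blast
  then have "de \<notin> Fq" using tr_eq_0_iff[of de] by simp
  have "de ^ q = de + 1"
    using de by (simp add: tr_def add_eq_iff_eq_add)
  define rho where "rho = ?ph de"
  have ph_add: "?ph (x + y) = ?ph x + ?ph y" for x y
    by (simp add: square_add algebra_simps)
  have "rho ^ q = (de ^ q)\<^sup>2 + de ^ q"
    by (simp add: rho_def power_q_add power_q_square)
  then have "rho \<in> Fq"
    using \<open>de ^ q = de + 1\<close> by (simp add: mem_Fq_iff rho_def square_add algebra_simps two_eq_0)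
  have "?A \<subseteq> Fq" by auto
  have "rho \<notin> ?A"
  proof
    assume "rho \<in> ?A"
    then obtain al where "al \<in> Fq" "?ph al = ?ph de" by (auto simp: rho_def)
    then show False
      using \<open>de \<notin> Fq\<close> square_plus_self_eq_iff by auto
  qed
  have shifted: "(\<lambda>t. t + rho) ` ?A = ?ph ` ((\<lambda>x. x + de) ` Fq)"
    by (force simp: ph_add rho_def image_image)
  have "?A \<inter> (\<lambda>t. t + rho) ` ?A = {}"
  proof (rule ccontr)
    assume "?A \<inter> (\<lambda>t. t + rho) ` ?A \<noteq> {}"
    then obtain al be where "al \<in> Fq" "be \<in> Fq" and eq: "?ph al = ?ph be + rho" by auto
    have "?ph (al + be) = ?ph al + ?ph be" by (rule ph_add)
    also have "\<dots> = rho + (?ph be + ?ph be)" unfolding eq by (simp only: add_ac)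
    finally have "rho = ?ph (al + be)" by simp
    with \<open>al \<in> Fq\<close> \<open>be \<in> Fq\<close> \<open>rho \<notin> ?A\<close> show False by blast
  qed
  then have "card (?A \<union> (\<lambda>t. t + rho) ` ?A) = 2 * card ?A"
    by (simp add: card_Un_disjoint card_image inj_on_def)
  moreover have sub: "?A \<union> (\<lambda>t. t + rho) ` ?A \<subseteq> Fq"
    using \<open>rho \<in> Fq\<close> by auto
  ultimately have "card (?A \<union> (\<lambda>t. t + rho) ` ?A) = card Fq"
    using card_Fq_le_double_card_image card_mono[OF _ sub] by simp
  then have "?A \<union> (\<lambda>t. t + rho) ` ?A = Fq"
    using card_subset_eq[OF _ sub] by simp
  with assms have "g \<in> ?A \<or> g \<in> ?ph ` ((\<lambda>x. x + de) ` Fq)"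
    unfolding shifted by blast
  then obtain v where "g = ?ph v" by blast
  then show ?thesis by (intro exI[of _ v]) simp
qed

subsection \<open>Points of the Hermitian surface on the quadric\<close>

lemma hermitian_quadric_eq_iff:
  "tr (a * x\<^sup>2 + b * y\<^sup>2 + c * x * y + d * x + e * y + f) = nm x + nm y \<longleftrightarrow>
   quad 1 a x + tr ((c * y + d) * x) + (nm y + tr (b * y\<^sup>2) + tr (e * y) + tr f) = 0"
proof -
  have "tr (a * x\<^sup>2 + b * y\<^sup>2 + c * x * y + d * x + e * y + f) = nm x + nm y \<longleftrightarrow>
      tr (a * x\<^sup>2 + b * y\<^sup>2 + c * x * y + d * x + e * y + f) + (nm x + nm y) = 0"
    by (rule add_eq_0_iff_eq[symmetric])
  also have "tr (a * x\<^sup>2 + b * y\<^sup>2 + c * x * y + d * x + e * y + f) + (nm x + nm y)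
      = quad 1 a x + tr ((c * y + d) * x) + (nm y + tr (b * y\<^sup>2) + tr (e * y) + tr f)"
    by (simp add: quad_def tr_add algebra_simps)
  finally show ?thesis .
qed

lemma quad_section_constant:
  "quad 1 a ((c * y + d) ^ q) + tr ((c * y + d) * (c * y + d) ^ q) + (nm y + tr (b * y\<^sup>2) + tr (e * y) + tr f)
   = quad (nm c + 1) (a ^ q * c\<^sup>2 + b) y + tr ((c * d ^ q + e) * y) + (nm d + tr (a * (d ^ q)\<^sup>2) + tr f)"
proof -
  define z where "z = c * y + d"
  have "nm z = nm (c * y) + nm d + tr (c * y * d ^ q)"
    unfolding z_def by (rule nm_add)
  also have "nm (c * y) = nm c * nm y" by (rule nm_mult)
  also have "c * y * d ^ q = c * d ^ q * y" by (simp only: mult.assoc mult.commute[of y])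
  finally have nm_z: "nm z = nm c * nm y + nm d + tr (c * d ^ q * y)" .
  have "(a ^ q * c\<^sup>2 * y\<^sup>2) ^ q = a * (c ^ q * y ^ q)\<^sup>2"
    by (simp add: power_mult_distrib power_q_square)
  then have "tr (a * (c ^ q * y ^ q)\<^sup>2) = tr (a ^ q * c\<^sup>2 * y\<^sup>2)"
    using tr_power_q[of "a ^ q * c\<^sup>2 * y\<^sup>2"] by simp
  then have tr_z: "tr (a * (z ^ q)\<^sup>2) = tr (a ^ q * c\<^sup>2 * y\<^sup>2) + tr (a * (d ^ q)\<^sup>2)"
    by (simp add: z_def power_q_add power_mult_distrib square_add distrib_left tr_add)
  have "z * z ^ q = nm z" by (simp add: nm_def mult.commute)
  then have "tr (z * z ^ q) = 0" by (simp add: tr_eq_0_iff)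
  moreover have "quad 1 a (z ^ q) = nm z + tr (a * (z ^ q)\<^sup>2)"
    by (simp add: quad_def nm_def mult.commute)
  ultimately have "quad 1 a (z ^ q) + tr (z * z ^ q) + (nm y + tr (b * y\<^sup>2) + tr (e * y) + tr f)
      = nm c * nm y + nm d + tr (c * d ^ q * y) + tr (a ^ q * c\<^sup>2 * y\<^sup>2) + tr (a * (d ^ q)\<^sup>2)
        + (nm y + tr (b * y\<^sup>2) + tr (e * y) + tr f)"
    using nm_z tr_z by simp
  also have "\<dots> = quad (nm c + 1) (a ^ q * c\<^sup>2 + b) y + tr ((c * d ^ q + e) * y) + (nm d + tr (a * (d ^ q)\<^sup>2) + tr f)"
    by (simp add: quad_def tr_add algebra_simps)
  finally show ?thesis by (simp add: z_def)
qed

lemma card_hermitian_quadric_section: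
  "card {x. tr (a * x\<^sup>2 + b * y\<^sup>2 + c * x * y + d * x + e * y + f) = nm x + nm y}
   = card {x. quad 1 a x = quad (nm c + 1) (a ^ q * c\<^sup>2 + b) y + tr ((c * d ^ q + e) * y)
                             + (nm d + tr (a * (d ^ q)\<^sup>2) + tr f)}"
proof -
  let ?nu = "nm y + tr (b * y\<^sup>2) + tr (e * y) + tr f"
  have "card {x. tr (a * x\<^sup>2 + b * y\<^sup>2 + c * x * y + d * x + e * y + f) = nm x + nm y}
      = card {x. quad 1 a x + tr ((c * y + d) * x) + ?nu = 0}"
    by (simp only: hermitian_quadric_eq_iff)
  also have "\<dots> = card {x. quad 1 a x = quad 1 a ((c * y + d) ^ q) + tr ((c * y + d) * (c * y + d) ^ q) + ?nu}"
    using card_quad_affine_eq[where k = 1 and l = a and m = "c * y + d" and nu = ?nu] by simp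
  finally show ?thesis by (simp only: quad_section_constant)
qed

lemma card_hermitian_quadric_pairs:
  fixes a b c d e f :: 'a
  defines "S \<equiv> \<lambda>y. quad (nm c + 1) (a ^ q * c\<^sup>2 + b) y + tr ((c * d ^ q + e) * y)
                    + (nm d + tr (a * (d ^ q)\<^sup>2) + tr f)"
  defines "M \<equiv> card {y. S y = 0}"
  shows "int (card {(x, y). tr (a * x\<^sup>2 + b * y\<^sup>2 + c * x * y + d * x + e * y + f) = nm x + nm y})
    = (if isotropic 1 a then int q ^ 3 - int q ^ 2 + int q * int M else int q ^ 3 + int q ^ 2 - int q * int M)"
proof -
  define Z where "Z = (if isotropic 1 a then 2 * q - 1 else 1)"
  define C where "C = (if isotropic 1 a then q - 1 else q + 1)"
  have "S y \<in> Fq" for y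
    unfolding S_def by (simp add: quad_in_Fq)
  then have section_card: "card {x. tr (a * x\<^sup>2 + b * y\<^sup>2 + c * x * y + d * x + e * y + f) = nm x + nm y}
      = (if S y = 0 then Z else C)" for y
    using card_hermitian_quadric_section[where a = a and b = b and c = c and d = d and e = e and f = f and y = y]
      card_quad_value[where k = 1 and l = a and t = "S y"]
    by (simp add: S_def Z_def C_def)
  have "card {(x, y). tr (a * x\<^sup>2 + b * y\<^sup>2 + c * x * y + d * x + e * y + f) = nm x + nm y}
      = (\<Sum>y\<in>UNIV. if S y = 0 then Z else C)"
    by (simp add: card_pairs_eq_sum section_card)
  also have "\<dots> = M * Z + (q\<^sup>2 - M) * C"
    by (simp add: sum.If_cases M_def Compl_eq_Diff_UNIV card_Diff_subset card_UNIV_eq)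
  finally have "int (card {(x, y). tr (a * x\<^sup>2 + b * y\<^sup>2 + c * x * y + d * x + e * y + f) = nm x + nm y})
      = int M * int Z + (int q ^ 2 - int M) * int C"
    using card_mono[of UNIV "{y. S y = 0}"] card_UNIV_eq by (simp add: M_def)
  also have "\<dots> = (if isotropic 1 a then int q ^ 3 - int q ^ 2 + int q * int M
      else int q ^ 3 + int q ^ 2 - int q * int M)"
    using q_ge_2 by (cases "isotropic 1 a")
      (simp_all add: Z_def C_def algebra_simps power2_eq_square power3_eq_cube)
  finally show ?thesis .
qed

lemma card_hermitian_quadric_triples:
  "card {(x, y, z). z ^ q + z = x ^ (q + 1) + y ^ (q + 1) \<and> z = a * x\<^sup>2 + b * y\<^sup>2 + c * x * y + d * x + e * y + f}
   = card {(x, y). tr (a * x\<^sup>2 + b * y\<^sup>2 + c * x * y + d * x + e * y + f) = nm x + nm y}"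
proof -
  have "{(x, y, z). z ^ q + z = x ^ (q + 1) + y ^ (q + 1) \<and> z = a * x\<^sup>2 + b * y\<^sup>2 + c * x * y + d * x + e * y + f}
      = (\<lambda>(x, y). (x, y, a * x\<^sup>2 + b * y\<^sup>2 + c * x * y + d * x + e * y + f))
          ` {(x, y). tr (a * x\<^sup>2 + b * y\<^sup>2 + c * x * y + d * x + e * y + f) = nm x + nm y}"
    by (auto simp: tr_def nm_eq_power)
  moreover have "inj_on (\<lambda>(x, y). (x, y, a * x\<^sup>2 + b * y\<^sup>2 + c * x * y + d * x + e * y + f)) A" for A
    by (auto simp: inj_on_def)
  ultimately show ?thesis by (simp add: card_image)
qed

subsection \<open>Lines and singular points of the quadric\<close>

lemma Qform_contains_line:
  fixes a b c d e f :: 'a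
  assumes "b = a ^ q * c\<^sup>2"
  shows "contains_line (Qform a b c d e f)"
proof -
  obtain u where u: "a * u\<^sup>2 + u + a ^ q = 0"
  proof (cases "a = 0")
    case False
    obtain v where v: "v\<^sup>2 + v + nm a = 0"
      using exists_root_artin_schreier[OF nm_in_Fq] by blast
    have "a * (v / a)\<^sup>2 + v / a + a ^ q = (v\<^sup>2 + v + nm a) / a"
      using False by (simp add: nm_def field_simps power2_eq_square)
    with v show ?thesis using that by simp
  qed (use that in simp)
  define p where "p = c * u"
  have "a * p\<^sup>2 + c * p + b = c\<^sup>2 * (a * u\<^sup>2 + u + a ^ q)"
    by (simp add: p_def assms algebra_simps power2_eq_square)
  with u have p: "a * p\<^sup>2 + c * p + b = 0" by simp
  define u0 :: "'a vec4" where "u0 = (1, 0, 0, f)"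
  define w :: "'a vec4" where "w = (0, p, 1, d * p + e)"
  have "Qform a b c d e f (vadd (smul s u0) (smul t w)) = t\<^sup>2 * (a * p\<^sup>2 + c * p + b)" for s t
    by (simp add: u0_def w_def Qform_def algebra_simps power2_eq_square)
  with p have "\<forall>s t. Qform a b c d e f (vadd (smul s u0) (smul t w)) = 0" by simp
  moreover have "u0 \<noteq> zero4" and "\<forall>k. w \<noteq> smul k u0"
    by (simp_all add: u0_def w_def zero4_def)
  ultimately show ?thesis
    unfolding contains_line_def by blast
qed

lemma elliptic_quadric_coefficient_ne_0:
  fixes a b c d e f :: 'a
  assumes "elliptic_quadric (Qform a b c d e f)"
  shows "a ^ q * c\<^sup>2 + b \<noteq> 0"
proof
  assume "a ^ q * c\<^sup>2 + b = 0"
  then have "contains_line (Qform a b c d e f)"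
    by (intro Qform_contains_line) (simp add: add_eq_iff_eq_add)
  with assms show False by (simp add: elliptic_quadric_def)
qed

lemma quadratic_cone_imp_c_eq_0:
  fixes a b c d e f :: 'a
  assumes "quadratic_cone (Qform a b c d e f)"
  shows "c = 0"
proof (rule ccontr)
  assume "c \<noteq> 0"
  from assms obtain V where "singular_pt (Qform a b c d e f) V"
    unfolding quadratic_cone_def by blast
  moreover obtain J X Y Z where V: "V = (J, X, Y, Z)" by (cases V) auto
  ultimately have "V \<noteq> zero4" and pol: "\<And>w. polar (Qform a b c d e f) V w = 0"
    unfolding singular_pt_def by auto
  have P: "polar (Qform a b c d e f) V (0, 0, 0, 1) = J"
    "polar (Qform a b c d e f) V (0, 1, 0, 0) = c * Y + d * J"
    "polar (Qform a b c d e f) V (0, 0, 1, 0) = c * X + e * J"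
    "polar (Qform a b c d e f) V (1, 0, 0, 0) = d * X + e * Y + Z"
    unfolding V polar_def Qform_def
    by (simp_all add: algebra_simps power2_eq_square two_eq_0)
  have "J = 0" using pol[of "(0, 0, 0, 1)"] P(1) by simp
  moreover from this have "Y = 0" and "X = 0"
    using pol[of "(0, 1, 0, 0)"] pol[of "(0, 0, 1, 0)"] P(2,3) \<open>c \<noteq> 0\<close> by simp_all
  moreover from calculation have "Z = 0" using pol[of "(1, 0, 0, 0)"] P(4) by simp
  ultimately show False using \<open>V \<noteq> zero4\<close> V by (simp add: zero4_def)
qed

end

theorem lemma3:
  fixes a b c d e f :: "'a::{field,finite}" and q h :: nat
  assumes "q = 2 ^ h"
    and "card (UNIV :: 'a set) = q ^ 2"
    and "irreducible_quadric (Qform a b c d e f)"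
  defines "N \<equiv> card {(x, y, z). z ^ q + z = x ^ (q + 1) + y ^ (q + 1) \<and>
                   z = a*x^2 + b*y^2 + c*x*y + d*x + e*y + f}"
  shows "(elliptic_quadric (Qform a b c d e f) \<longrightarrow>
            N \<in> {q^3 - q^2, q^3 - q^2 + q, q^3 - q, q^3, q^3 + q, q^3 + q^2 - q, q^3 + q^2})
       \<and> (quadratic_cone (Qform a b c d e f) \<longrightarrow>
            N \<in> {q^3 - q^2 + q, q^3 - q, q^3 + q, q^3 + q^2 - q})
       \<and> (hyperbolic_quadric (Qform a b c d e f) \<longrightarrow>
            N \<in> {q^2, q^3 - q^2, q^3 - q^2 + q, q^3 - q, q^3, q^3 + q, q^3 + q^2 - q, q^3 + q^2, 2*q^3 - q^2})"
proof -
  interpret gf_q2 q "TYPE('a)"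
    by unfold_locales (use assms(1,2) in auto)
  define k l m nu where "k = nm c + 1" and "l = a ^ q * c\<^sup>2 + b" and "m = c * d ^ q + e"
    and "nu = nm d + tr (a * (d ^ q)\<^sup>2) + tr f"
  define M where "M = card {y. quad k l y + tr (m * y) + nu = 0}"
  have N: "int N = int q ^ 3 + int q ^ 2 - int q * int M \<or> int N = int q ^ 3 - int q ^ 2 + int q * int M"
    using card_hermitian_quadric_pairs[where a = a and b = b and c = c and d = d and e = e and f = f]
    unfolding N_def card_hermitian_quadric_triples M_def k_def l_def m_def nu_def by presburger
  have "k \<in> Fq" "nu \<in> Fq" by (simp_all add: k_def nu_def)
  then have M: "M \<in> {0, 1, q - 1, q, q + 1, 2 * q - 1, 2 * q} \<or> (k = 0 \<and> l = 0 \<and> M = q\<^sup>2)"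
    unfolding M_def by (rule card_quad_affine_cases)
  have "M \<in> {0, 1, q - 1, q, q + 1, 2 * q - 1, 2 * q}" if "elliptic_quadric (Qform a b c d e f)"
    using M elliptic_quadric_coefficient_ne_0[OF that] by (auto simp: l_def)
  moreover have "M \<in> {1, q - 1, q + 1, 2 * q - 1}" if "quadratic_cone (Qform a b c d e f)"
    using card_quad_affine_nondegenerate[of k nu l m] quadratic_cone_imp_c_eq_0[OF that] \<open>nu \<in> Fq\<close>
    by (simp add: M_def k_def nm_def)
  moreover from M have "M \<in> {0, 1, q - 1, q, q + 1, 2 * q - 1, 2 * q, q\<^sup>2}" by blast
  ultimately show ?thesis
    using hermitian_count_table[OF q_ge_2 N] by simp
qed

end
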